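(* With the notation of the context, $$|S|\lesssim\min\Big(N_3^{2-\alpha}\log(2+N_1\vee N_2)\,(N_1\wedge N_2)+N_1N_2,\ \ N_1^{2-\alpha}\log(2+N_2\vee N_3)\,(N_2\wedge N_3)+N_2N_3\Big).$$
   Context: Fix $\alpha\in(1,2)$, dyadic numbers $1\le N_1,N_2,N_3\le N$, a real number $m$ and a constant $C_0>0$. Let $S$ be the set of $(k,k_1,k_2,k_3)\in\mathbb Z^4$ with $k=k_1-k_2+k_3$, $k_2\notin\{k_1,k_3\}$, $\big||k_1|^\alpha-|k_2|^\alpha+|k_3|^\alpha-|k|^\alpha-m\big|\le C_0$, $|k|\le N$ and $|k_j|\le N_j$ for $j=1,2,3$. $|A|$ is cardinality, $a\wedge b=\min(a,b)$, $a\vee b=\max(a,b)$. $A\lesssim B$ means $A\le CB$ with $C$ depending only on $\alpha$ and $C_0$. *)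

theory Defs
  imports Complex_Main
begin

definition dyadic :: "real \<Rightarrow> bool" where
  "dyadic x \<longleftrightarrow> (\<exists>j::nat. x = 2 ^ j)"

definition resS :: "real \<Rightarrow> real \<Rightarrow> real \<Rightarrow> real \<Rightarrow> real \<Rightarrow> real \<Rightarrow> real
    \<Rightarrow> (int \<times> int \<times> int \<times> int) set" where
  "resS \<alpha> C0 m N N1 N2 N3 =
    {(k, k1, k2, k3). k = k1 - k2 + k3 \<and> k2 \<noteq> k1 \<and> k2 \<noteq> k3 \<and>
      \<bar>\<bar>real_of_int k1\<bar> powr \<alpha> - \<bar>real_of_int k2\<bar> powr \<alpha> + \<bar>real_of_int k3\<bar> powr \<alpha>
        - \<bar>real_of_int k\<bar> powr \<alpha> - m\<bar> \<le> C0 \<and>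
      \<bar>real_of_int k\<bar> \<le> N \<and> \<bar>real_of_int k1\<bar> \<le> N1 \<and> \<bar>real_of_int k2\<bar> \<le> N2 \<and>
      \<bar>real_of_int k3\<bar> \<le> N3}"

end

(*
  Fix k1 \<noteq> k2 and put d = k1 - k2, so that k = k3 + d.  The resonance condition confines
  |k3 + d|^\<alpha> - |k3|^\<alpha> to an interval of length 2 C0.  As |x|^\<alpha> is convex with second
  derivative \<alpha>(\<alpha>-1)|x|^(\<alpha>-2), this function of k3 is monotone, with steps of size at least
  \<alpha>(\<alpha>-1)|d|(N3 + |d|)^(\<alpha>-2) on |k3| \<le> N3; hence only 1 + O(1 + N3^(2-\<alpha>)/|d|) values of k3
  are admissible.  Summing over the pairs (k1, k2) gives O(N1 N2) plus N3^(2-\<alpha>) times the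
  harmonic sum of 1/|k1 - k2|, which is O(min(N1, N2) log(2 + max(N1, N2))).  The second bound
  follows from the symmetry k1 \<leftrightarrow> k3 of the resonant set.
*)

theory Submission
  imports Defs
begin

lemma powr_diff_ge_linear:
  fixes b u v R :: real
  assumes b: "0 < b" "b < 1" and uv: "0 \<le> u" "u < v" "v \<le> R"
  shows "b * (v - u) * R powr (b - 1) \<le> v powr b - u powr b"
proof (cases "u = 0")
  case True
  have v: "v > 0" using uv True by simp
  have "b * (v * R powr (b - 1)) \<le> v * R powr (b - 1)"
    using b v by (intro mult_left_le_one_le) auto
  also have "\<dots> \<le> v * v powr (b - 1)" using b v uv by (simp add: powr_mono2')
  also have "\<dots> = v powr b" using v by (simp add: powr_diff)
  finally show ?thesis using True by (simp add: mult.assoc)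
next
  case False
  then have u: "u > 0" using uv by simp
  have "\<exists>z. u < z \<and> z < v \<and> v powr b - u powr b = (v - u) * (b * z powr (b - 1))"
    by (rule MVT2) (use uv u in \<open>auto intro!: has_real_derivative_powr\<close>)
  then obtain z where z: "u < z" "z < v" "v powr b - u powr b = (v - u) * (b * z powr (b - 1))"
    by blast
  have "R powr (b - 1) \<le> z powr (b - 1)" using b z u uv by (intro powr_mono2') auto
  then have "b * (v - u) * R powr (b - 1) \<le> b * (v - u) * z powr (b - 1)"
    using b uv by (intro mult_left_mono) auto
  with z show ?thesis by (simp add: algebra_simps)
qed

definition signed_powr :: "real \<Rightarrow> real \<Rightarrow> real" where
  "signed_powr b t = sgn t * \<bar>t\<bar> powr b"

lemma signed_powr_diff_ge_linear:
  fixes b u v R :: real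
  assumes b: "0 < b" "b < 1" and uv: "u < v" "\<bar>u\<bar> \<le> R" "\<bar>v\<bar> \<le> R"
  shows "b * (v - u) * R powr (b - 1) \<le> signed_powr b v - signed_powr b u"
proof -
  consider "0 \<le> u" | "u < 0" "0 \<le> v" | "v < 0" by linarith
  then show ?thesis
  proof cases
    case 1
    then show ?thesis using powr_diff_ge_linear[OF b 1 uv(1)] uv
      by (cases "u = 0") (auto simp: signed_powr_def sgn_if)
  next
    case 2
    have "b * (v - u) * R powr (b - 1) = b * (v - 0) * R powr (b - 1) + b * (0 - u) * R powr (b - 1)"
      by (simp add: algebra_simps)
    also have "\<dots> \<le> (v powr b - 0 powr b) + ((-u) powr b - 0 powr b)"
      using powr_diff_ge_linear[OF b, of 0 v R] powr_diff_ge_linear[OF b, of 0 "-u" R] 2 uv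
      by (cases "v = 0") (auto intro: add_mono)
    also have "\<dots> = signed_powr b v - signed_powr b u"
      using 2 by (cases "v = 0") (auto simp: signed_powr_def sgn_if)
    finally show ?thesis .
  next
    case 3
    then show ?thesis using powr_diff_ge_linear[OF b, of "-v" "-u" R] uv
      by (auto simp: signed_powr_def sgn_if algebra_simps)
  qed
qed

lemma has_real_derivative_abs_powr:
  fixes a t :: real
  assumes "t \<noteq> 0"
  shows "((\<lambda>x. \<bar>x\<bar> powr a) has_real_derivative a * signed_powr (a - 1) t) (at t)"
proof (cases "t > 0")
  case True
  have "\<forall>\<^sub>F x in nhds t. x powr a = \<bar>x\<bar> powr a"
    using eventually_nhds_in_open[of "{0<..}" t] True by (auto elim!: eventually_mono)
  moreover have "((\<lambda>x. x powr a) has_real_derivative a * t powr (a - 1)) (at t)"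
    using True by (rule has_real_derivative_powr)
  ultimately show ?thesis using True
    by (simp add: DERIV_cong_ev signed_powr_def)
next
  case False
  then have t: "t < 0" using assms by simp
  have "\<forall>\<^sub>F x in nhds t. (-x) powr a = \<bar>x\<bar> powr a"
    using eventually_nhds_in_open[of "{..<0}" t] t by (auto elim!: eventually_mono)
  moreover have "((\<lambda>x. (-x) powr a) has_real_derivative a * (-t) powr (a - 1) * (-1)) (at t)"
    using t by (auto intro!: derivative_eq_intros)
  ultimately show ?thesis using t
    by (simp add: DERIV_cong_ev signed_powr_def)
qed

definition powr_gap :: "real \<Rightarrow> real \<Rightarrow> real \<Rightarrow> real" where
  "powr_gap a d x = \<bar>x + d\<bar> powr a - \<bar>x\<bar> powr a"

lemma powr_gap_unit_step_ge:
  fixes a M :: real and d j :: int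
  assumes a: "1 < a" "a < 2" and d: "d \<ge> 1"
    and M: "\<bar>real_of_int j\<bar> \<le> M" "\<bar>real_of_int j + 1\<bar> \<le> M"
  shows "a * (a - 1) * d * (M + d) powr (a - 2)
     \<le> powr_gap a d (j + 1) - powr_gap a d j"
proof -
  let ?G = "powr_gap a d" and ?G' = "\<lambda>x::real. a * (signed_powr (a - 1) (x + d) - signed_powr (a - 1) x)"
  have cont: "continuous_on {real_of_int j..j + 1} ?G"
    unfolding powr_gap_def using a by (auto intro!: continuous_intros continuous_on_powr')
  have der: "(?G has_real_derivative ?G' x) (at x)" if x: "real_of_int j < x" "x < real_of_int j + 1" for x
  proof -
    have "x \<notin> \<int>" using x by (auto elim!: Ints_cases)
    \<comment> \<open>so \<open>x\<close> avoids both kinks \<open>0\<close> and \<open>-d\<close> of \<open>?G\<close>\<close>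
    then have "x \<noteq> 0" "x + d \<noteq> 0" by (auto simp: add_eq_0_iff2)
    have "((\<lambda>x. x + real_of_int d) has_real_derivative 1) (at x)"
      by (auto intro!: derivative_eq_intros)
    then have "((\<lambda>x. \<bar>x + d\<bar> powr a) has_real_derivative a * signed_powr (a - 1) (x + d) * 1) (at x)"
      by (rule DERIV_chain2[where g = "\<lambda>x. x + real_of_int d",
            OF has_real_derivative_abs_powr[OF \<open>x + d \<noteq> 0\<close>]])
    moreover have "((\<lambda>x. \<bar>x\<bar> powr a) has_real_derivative a * signed_powr (a - 1) x) (at x)"
      by (rule has_real_derivative_abs_powr[OF \<open>x \<noteq> 0\<close>])
    ultimately show ?thesis unfolding powr_gap_def by (simp add: DERIV_diff algebra_simps)
  qed
  obtain l z where z: "real_of_int j < z" "z < real_of_int j + 1" "(?G has_real_derivative l) (at z)"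
    and l: "?G (j + 1) - ?G j = (real_of_int j + 1 - j) * l"
    using MVT[OF _ cont] der unfolding real_differentiable_def by force
  have "?G (j + 1) - ?G j = ?G' z" using l DERIV_unique[OF z(3) der[OF z(1,2)]] by simp
  have "(a - 1) * (z + d - z) * (M + d) powr (a - 1 - 1)
      \<le> signed_powr (a - 1) (z + d) - signed_powr (a - 1) z"
    by (rule signed_powr_diff_ge_linear) (use a d M z in auto)
  then have "a * ((a - 1) * d * (M + d) powr (a - 2)) \<le> ?G' z"
    using a by (intro mult_left_mono) (auto simp: algebra_simps)
  with \<open>?G (j + 1) - ?G j = ?G' z\<close> show ?thesis by (simp add: algebra_simps)
qed

lemma powr_gap_growth:
  fixes a M :: real and d j :: int
  assumes a: "1 < a" "a < 2" and d: "d \<ge> 1"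
    and M: "\<bar>real_of_int j\<bar> \<le> M" "\<bar>real_of_int j + real n\<bar> \<le> M"
  shows "real n * (a * (a - 1) * d * (M + d) powr (a - 2)) \<le> powr_gap a d (j + n) - powr_gap a d j"
  using M(2)
proof (induction n)
  case (Suc n)
  have "\<bar>real_of_int j + real n\<bar> \<le> M" using M(1) Suc.prems by auto
  note IH = Suc.IH[OF this]
  have "\<bar>real_of_int (j + n)\<bar> \<le> M" "\<bar>real_of_int (j + n) + 1\<bar> \<le> M"
    using M(1) Suc.prems by auto
  from powr_gap_unit_step_ge[OF a d this] IH show ?case
    by (simp add: distrib_right add.assoc add.commute[of 1])
qed simp

lemma card_le_of_growth:
  fixes T :: "int set" and f :: "int \<Rightarrow> real"
  assumes "finite T" "\<delta> > 0" "w \<ge> 0"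
    and growth: "\<And>x y. x \<in> T \<Longrightarrow> y \<in> T \<Longrightarrow> x \<le> y \<Longrightarrow> \<delta> * real_of_int (y - x) \<le> f y - f x"
    and spread: "\<And>x y. x \<in> T \<Longrightarrow> y \<in> T \<Longrightarrow> f y - f x \<le> w"
  shows "real (card T) \<le> 1 + w / \<delta>"
proof (cases "T = {}")
  case True
  with assms show ?thesis by simp
next
  case False
  define x0 where "x0 = Min T"
  have x0: "x0 \<in> T" "\<And>y. y \<in> T \<Longrightarrow> x0 \<le> y"
    using assms False unfolding x0_def by auto
  have "T \<subseteq> {x0..x0 + \<lfloor>w / \<delta>\<rfloor>}"
  proof
    fix y assume y: "y \<in> T"
    have "\<delta> * (y - x0) \<le> w" using growth[OF x0(1) y x0(2)[OF y]] spread[OF x0(1) y] by simp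
    then have "real_of_int (y - x0) \<le> w / \<delta>" using \<open>\<delta> > 0\<close> by (simp add: field_simps)
    then show "y \<in> {x0..x0 + \<lfloor>w / \<delta>\<rfloor>}"
      using x0(2)[OF y] le_floor_iff[of "y - x0" "w / \<delta>"] by simp
  qed
  then have "card T \<le> nat (\<lfloor>w / \<delta>\<rfloor> + 1)" using card_mono[of "{x0..x0 + \<lfloor>w / \<delta>\<rfloor>}"] by simp
  moreover have "\<lfloor>w / \<delta>\<rfloor> \<ge> 0" using assms by simp
  ultimately show ?thesis using of_int_floor_le[of "w / \<delta>"] by linarith
qed

lemma finite_int_abs_le: "finite {x::int. \<bar>real_of_int x\<bar> \<le> M}"
  by (rule finite_subset[of _ "{-\<lceil>M\<rceil>..\<lceil>M\<rceil>}"]) (auto simp: abs_le_iff, linarith+)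

definition powr_gap_level :: "real \<Rightarrow> real \<Rightarrow> int \<Rightarrow> real \<Rightarrow> real \<Rightarrow> int set" where
  "powr_gap_level a M d c C0 = {x::int. \<bar>real_of_int x\<bar> \<le> M \<and> \<bar>powr_gap a d x - c\<bar> \<le> C0}"

lemma finite_powr_gap_level: "finite (powr_gap_level a M d c C0)"
  by (rule finite_subset[OF _ finite_int_abs_le[of M]]) (auto simp: powr_gap_level_def)

lemma card_powr_gap_level_le:
  fixes a M C0 c :: real and d :: int
  assumes a: "1 < a" "a < 2" and d: "d \<ge> 1" and C0: "C0 > 0" and M: "M \<ge> 1"
  shows "real (card (powr_gap_level a M d c C0)) \<le> 1 + 2 * C0 / (a * (a - 1) * d * (M + d) powr (a - 2))"
proof (rule card_le_of_growth[OF finite_powr_gap_level, where f = "\<lambda>x. powr_gap a d x"])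
  show "0 < a * (a - 1) * d * (M + d) powr (a - 2)" "0 \<le> 2 * C0" using a d M C0 by auto
next
  fix x y assume "x \<in> powr_gap_level a M d c C0" "y \<in> powr_gap_level a M d c C0" "x \<le> y"
  then show "a * (a - 1) * d * (M + d) powr (a - 2) * real_of_int (y - x) \<le> powr_gap a d y - powr_gap a d x"
    using powr_gap_growth[OF a d, of x M "nat (y - x)"] by (auto simp: powr_gap_level_def mult.commute)
next
  fix x y assume "x \<in> powr_gap_level a M d c C0" "y \<in> powr_gap_level a M d c C0"
  then show "powr_gap a d y - powr_gap a d x \<le> 2 * C0" by (auto simp: powr_gap_level_def)
qed

lemma powr_add_le:
  fixes x y e :: real
  assumes "x \<ge> 0" "y \<ge> 0" "0 \<le> e" "e \<le> 1"
  shows "(x + y) powr e \<le> 2 * (x powr e + y powr e)"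
proof -
  have "(x + y) powr e \<le> (2 * max x y) powr e"
    using assms by (intro powr_mono2) auto
  also have "\<dots> = 2 powr e * max x y powr e" using assms by (simp add: powr_mult)
  also have "\<dots> \<le> 2 * max x y powr e"
    using powr_mono[of e 1 2] assms by (intro mult_right_mono) auto
  also have "\<dots> \<le> 2 * (x powr e + y powr e)" by (simp add: max_def)
  finally show ?thesis .
qed

lemma powr_gap_level_uminus: "powr_gap_level a M (-d) c C0 = uminus ` powr_gap_level a M d c C0"
proof -
  have "powr_gap a e (- x) = powr_gap a (- e) x" for e x :: real
  proof -
    have "\<bar>- x + e\<bar> = \<bar>x - e\<bar>" by linarith
    then show ?thesis by (simp add: powr_gap_def)
  qed
  then show ?thesis unfolding powr_gap_level_def
    by (auto intro!: image_eqI[where x = "- x" for x])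
qed

lemma card_powr_gap_level_le_inverse:
  fixes a M C0 c :: real and d :: int
  assumes a: "1 < a" "a < 2" and d: "d \<noteq> 0" and C0: "C0 > 0" and M: "M \<ge> 1"
  defines "K \<equiv> 4 * C0 / (a * (a - 1))"
  shows "real (card (powr_gap_level a M d c C0)) \<le> 1 + K + K * M powr (2 - a) / \<bar>real_of_int d\<bar>"
proof -
  have bound: "real (card (powr_gap_level a M e c C0)) \<le> 1 + K + K * M powr (2 - a) / e"
    if e: "e \<ge> 1" for e
  proof -
    have K: "K > 0" unfolding K_def using a C0 by simp
    have "2 * C0 / (a * (a - 1) * e * (M + e) powr (a - 2)) = K / 2 * ((M + e) powr (2 - a) / e)"
      using a e M by (simp add: K_def powr_minus[of _ "2 - a", simplified] field_simps)
    also have "\<dots> \<le> K / 2 * (2 * (M powr (2 - a) + e powr (2 - a)) / e)"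
      using K e M a powr_add_le[of M e "2 - a"] by (intro mult_left_mono divide_right_mono) auto
    also have "\<dots> = K * M powr (2 - a) / e + K * (e powr (2 - a) / e)"
      using e by (simp add: field_simps)
    also have "K * (e powr (2 - a) / e) \<le> K * 1"
      using K e a powr_mono[of "2 - a" 1 "real_of_int e"] by (intro mult_left_mono) auto
    finally show ?thesis using card_powr_gap_level_le[OF a e C0 M, of c] by simp
  qed
  show ?thesis
  proof (cases "d > 0")
    case False
    have "card (powr_gap_level a M d c C0) = card (powr_gap_level a M (- d) c C0)"
      using powr_gap_level_uminus[of a M "- d"] by (simp add: card_image)
    with False d show ?thesis using bound[of "- d"] by simp
  qed (use bound in simp)
qed

lemma sum_inverse_abs_nonzero_le:
  assumes "n \<ge> 1"
  shows "(\<Sum>y | y \<noteq> 0 \<and> \<bar>y\<bar> \<le> int n. 1 / \<bar>real_of_int y\<bar>) \<le> 2 * (1 + ln n)"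
  using assms
proof (induction n rule: dec_induct)
  case base
  have "{y::int. y \<noteq> 0 \<and> \<bar>y\<bar> \<le> 1} = {1, -1}" by auto
  then show ?case by simp
next
  case (step n)
  have "{y. y \<noteq> 0 \<and> \<bar>y\<bar> \<le> int (Suc n)} = insert (int n + 1) (insert (- int n - 1) {y. y \<noteq> 0 \<and> \<bar>y\<bar> \<le> int n})"
    by auto
  moreover have "finite {y::int. y \<noteq> 0 \<and> \<bar>y\<bar> \<le> int n}"
    by (rule finite_subset[of _ "{- int n..int n}"]) auto
  ultimately have "(\<Sum>y | y \<noteq> 0 \<and> \<bar>y\<bar> \<le> int (Suc n). 1 / \<bar>real_of_int y\<bar>)
      = (\<Sum>y | y \<noteq> 0 \<and> \<bar>y\<bar> \<le> int n. 1 / \<bar>real_of_int y\<bar>) + 2 / (n + 1)"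
    by (simp add: add.commute)
  moreover have "1 / (n + 1) \<le> ln (n + 1) - ln n"
    using ln_le_minus_one[of "n / (n + 1)"] step.hyps by (simp add: ln_div field_simps)
  ultimately show ?case using step.IH by (simp add: add.commute)
qed

lemma card_int_abs_le:
  assumes "M \<ge> 0"
  shows "real (card {x::int. \<bar>real_of_int x\<bar> \<le> M}) \<le> 2 * M + 1"
proof -
  have "{x::int. \<bar>real_of_int x\<bar> \<le> M} = {-\<lfloor>M\<rfloor>..\<lfloor>M\<rfloor>}"
  proof (rule set_eqI)
    fix x :: int
    have "\<bar>real_of_int x\<bar> \<le> M \<longleftrightarrow> real_of_int x \<le> M \<and> real_of_int (- x) \<le> M" by auto
    also have "\<dots> \<longleftrightarrow> x \<le> \<lfloor>M\<rfloor> \<and> - x \<le> \<lfloor>M\<rfloor>" by (simp only: le_floor_iff)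
    finally show "x \<in> {x. \<bar>real_of_int x\<bar> \<le> M} \<longleftrightarrow> x \<in> {-\<lfloor>M\<rfloor>..\<lfloor>M\<rfloor>}" by auto
  qed
  then show ?thesis using assms of_int_floor_le[of M] by simp
qed

lemma sum_inverse_dist_le:
  fixes N1 N2 :: real and k1 :: int
  assumes "N1 \<ge> 1" "N2 \<ge> 1" "\<bar>real_of_int k1\<bar> \<le> N1"
  shows "(\<Sum>k2 | \<bar>real_of_int k2\<bar> \<le> N2 \<and> k2 \<noteq> k1. 1 / \<bar>real_of_int (k1 - k2)\<bar>) \<le> 2 * (1 + ln (N1 + N2))"
proof -
  define n where "n = nat \<lfloor>N1 + N2\<rfloor>"
  have n: "n \<ge> 1" "real n \<le> N1 + N2"
    using assms of_int_floor_le[of "N1 + N2"] by (auto simp: n_def le_nat_iff le_floor_iff)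
  have "(\<Sum>k2 | \<bar>real_of_int k2\<bar> \<le> N2 \<and> k2 \<noteq> k1. 1 / \<bar>real_of_int (k1 - k2)\<bar>)
      = (\<Sum>y \<in> (\<lambda>k2. k1 - k2) ` {k2. \<bar>real_of_int k2\<bar> \<le> N2 \<and> k2 \<noteq> k1}. 1 / \<bar>real_of_int y\<bar>)"
    by (simp add: sum.reindex inj_on_def)
  also have "\<dots> \<le> (\<Sum>y | y \<noteq> 0 \<and> \<bar>y\<bar> \<le> int n. 1 / \<bar>real_of_int y\<bar>)"
  proof (rule sum_mono2)
    show "finite {y::int. y \<noteq> 0 \<and> \<bar>y\<bar> \<le> int n}"
      by (rule finite_subset[of _ "{- int n..int n}"]) auto
    show "(\<lambda>k2. k1 - k2) ` {k2. \<bar>real_of_int k2\<bar> \<le> N2 \<and> k2 \<noteq> k1} \<subseteq> {y. y \<noteq> 0 \<and> \<bar>y\<bar> \<le> int n}"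
      using assms by (auto simp: n_def le_nat_iff le_floor_iff)
  qed simp
  also have "\<dots> \<le> 2 * (1 + ln n)" by (rule sum_inverse_abs_nonzero_le[OF n(1)])
  also have "\<dots> \<le> 2 * (1 + ln (N1 + N2))" using n by simp
  finally show ?thesis .
qed

definition distinct_pairs :: "real \<Rightarrow> real \<Rightarrow> (int \<times> int) set" where
  "distinct_pairs N1 N2 = {(k1, k2). \<bar>real_of_int k1\<bar> \<le> N1 \<and> \<bar>real_of_int k2\<bar> \<le> N2 \<and> k1 \<noteq> k2}"

lemma distinct_pairs_subset: "distinct_pairs N1 N2 \<subseteq> {x. \<bar>real_of_int x\<bar> \<le> N1} \<times> {x. \<bar>real_of_int x\<bar> \<le> N2}"
  by (auto simp: distinct_pairs_def)

lemma finite_distinct_pairs: "finite (distinct_pairs N1 N2)"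
  by (rule finite_subset[OF distinct_pairs_subset]) (simp add: finite_int_abs_le)

lemma card_distinct_pairs_le:
  assumes "N1 \<ge> 1" "N2 \<ge> 1"
  shows "real (card (distinct_pairs N1 N2)) \<le> 9 * N1 * N2"
proof -
  let ?B = "\<lambda>M. {x::int. \<bar>real_of_int x\<bar> \<le> M}"
  have "card (distinct_pairs N1 N2) \<le> card (?B N1) * card (?B N2)"
    using card_mono[OF _ distinct_pairs_subset] by (simp add: finite_int_abs_le card_cartesian_product)
  then have "real (card (distinct_pairs N1 N2)) \<le> real (card (?B N1)) * real (card (?B N2))"
    by (metis of_nat_le_iff of_nat_mult)
  also have "\<dots> \<le> (2 * N1 + 1) * (2 * N2 + 1)"
    using card_int_abs_le[of N1] card_int_abs_le[of N2] assms by (intro mult_mono) auto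
  also have "\<dots> \<le> (3 * N1) * (3 * N2)" using assms by (intro mult_mono) auto
  finally show ?thesis by simp
qed

lemma distinct_pairs_swap: "distinct_pairs N2 N1 = prod.swap ` distinct_pairs N1 N2"
  by (auto simp: distinct_pairs_def)

lemma sum_distinct_pairs_inverse_le:
  assumes "N1 \<ge> 1" "N2 \<ge> 1"
  shows "(\<Sum>(k1, k2)\<in>distinct_pairs N1 N2. 1 / \<bar>real_of_int (k1 - k2)\<bar>) \<le> (2 * N1 + 1) * (2 * (1 + ln (N1 + N2)))"
proof -
  let ?B = "{x::int. \<bar>real_of_int x\<bar> \<le> N1}" and ?A = "\<lambda>k1. {k2. \<bar>real_of_int k2\<bar> \<le> N2 \<and> k2 \<noteq> k1}"
  have "distinct_pairs N1 N2 = Sigma ?B ?A" by (auto simp: distinct_pairs_def)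
  moreover have "finite (?A k1)" for k1 by (rule finite_subset[OF _ finite_int_abs_le[of N2]]) auto
  ultimately have "(\<Sum>(k1, k2)\<in>distinct_pairs N1 N2. 1 / \<bar>real_of_int (k1 - k2)\<bar>)
      = (\<Sum>k1\<in>?B. \<Sum>k2\<in>?A k1. 1 / \<bar>real_of_int (k1 - k2)\<bar>)"
    by (simp add: sum.Sigma finite_int_abs_le)
  also have "\<dots> \<le> (\<Sum>k1\<in>?B. 2 * (1 + ln (N1 + N2)))"
    using sum_inverse_dist_le[OF assms] by (intro sum_mono) auto
  also have "\<dots> \<le> (2 * N1 + 1) * (2 * (1 + ln (N1 + N2)))"
    using card_int_abs_le[of N1] assms by (simp add: mult_right_mono)
  finally show ?thesis .
qed

lemma one_plus_ln_add_le:
  fixes N1 N2 :: real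
  assumes "N1 \<ge> 1" "N2 \<ge> 1"
  shows "1 + ln (N1 + N2) \<le> 4 * ln (2 + max N1 N2)"
proof -
  have "N1 + N2 \<le> 3 * (2 + max N1 N2)" using assms by (simp add: max_def)
  also have "\<dots> \<le> (2 + max N1 N2) ^ 2"
    using assms unfolding power2_eq_square by (intro mult_right_mono) auto
  finally have "ln (N1 + N2) \<le> ln ((2 + max N1 N2) ^ 2)"
    using assms by (intro ln_mono) auto
  also have "\<dots> = 2 * ln (2 + max N1 N2)" using assms by (simp add: ln_realpow)
  finally have "ln (N1 + N2) \<le> 2 * ln (2 + max N1 N2)" .
  moreover have "- ln (2 + max N1 N2) \<le> - 2 / 3"
  proof -
    have "- ln (2 + max N1 N2) = ln (1 / (2 + max N1 N2))" using assms by (simp add: ln_div)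
    also have "\<dots> \<le> 1 / (2 + max N1 N2) - 1" using assms by (intro ln_le_minus_one) auto
    also have "\<dots> \<le> 1 / 3 - 1" using assms by (auto simp: max_def field_simps)
    finally show ?thesis by simp
  qed
  ultimately show ?thesis by linarith
qed

lemma sum_distinct_pairs_inverse_le_min:
  assumes "N1 \<ge> 1" "N2 \<ge> 1"
  shows "(\<Sum>(k1, k2)\<in>distinct_pairs N1 N2. 1 / \<bar>real_of_int (k1 - k2)\<bar>) \<le> 24 * min N1 N2 * ln (2 + max N1 N2)"
proof -
  let ?S = "\<lambda>N1 N2. \<Sum>(k1, k2)\<in>distinct_pairs N1 N2. 1 / \<bar>real_of_int (k1 - k2)\<bar>"
  have "?S N2 N1 = (\<Sum>(k1, k2)\<in>distinct_pairs N1 N2. 1 / \<bar>real_of_int (k2 - k1)\<bar>)"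
    unfolding distinct_pairs_swap[of N1 N2] sum.reindex[OF inj_swap] by (simp add: comp_def case_prod_beta)
  also have "\<dots> = ?S N1 N2" by (simp add: abs_minus_commute)
  finally have "?S N1 N2 \<le> (2 * N2 + 1) * (2 * (1 + ln (N2 + N1)))"
    using sum_distinct_pairs_inverse_le[OF assms(2,1)] by simp
  then have "?S N1 N2 \<le> (2 * min N1 N2 + 1) * (2 * (1 + ln (N1 + N2)))"
    using sum_distinct_pairs_inverse_le[OF assms] by (simp add: min_def add.commute)
  also have "\<dots> \<le> (3 * min N1 N2) * (2 * (4 * ln (2 + max N1 N2)))"
    using assms one_plus_ln_add_le[OF assms] by (intro mult_mono) auto
  finally show ?thesis by simp
qed

lemma card_resS_le_sum:
  "card (resS a C0 m N N1 N2 N3) \<le> (\<Sum>(k1, k2)\<in>distinct_pairs N1 N2.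
     card (powr_gap_level a N3 (k1 - k2) (\<bar>real_of_int k1\<bar> powr a - \<bar>real_of_int k2\<bar> powr a - m) C0))"
proof -
  let ?T = "\<lambda>(k1, k2). powr_gap_level a N3 (k1 - k2) (\<bar>real_of_int k1\<bar> powr a - \<bar>real_of_int k2\<bar> powr a - m) C0"
  let ?g = "\<lambda>((k1, k2), k3). (k1 - k2 + k3, k1, k2, k3)"
  \<comment> \<open>for fixed \<open>k1, k2\<close> the resonance condition says that \<open>powr_gap a (k1 - k2) k3\<close> is \<open>C0\<close>-close to a constant\<close>
  have "resS a C0 m N N1 N2 N3 \<subseteq> ?g ` Sigma (distinct_pairs N1 N2) ?T"
  proof
    fix q assume "q \<in> resS a C0 m N N1 N2 N3"
    then obtain k1 k2 k3 where q: "q = (k1 - k2 + k3, k1, k2, k3)" and "k2 \<noteq> k1"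
      and res: "\<bar>\<bar>real_of_int k1\<bar> powr a - \<bar>real_of_int k2\<bar> powr a + \<bar>real_of_int k3\<bar> powr a
                 - \<bar>real_of_int (k1 - k2 + k3)\<bar> powr a - m\<bar> \<le> C0"
      and "\<bar>real_of_int k1\<bar> \<le> N1" "\<bar>real_of_int k2\<bar> \<le> N2" "\<bar>real_of_int k3\<bar> \<le> N3"
      unfolding resS_def by blast
    moreover have "\<bar>powr_gap a (k1 - k2) k3 - (\<bar>real_of_int k1\<bar> powr a - \<bar>real_of_int k2\<bar> powr a - m)\<bar> \<le> C0"
      using res by (simp add: powr_gap_def abs_minus_commute algebra_simps)
    ultimately show "q \<in> ?g ` Sigma (distinct_pairs N1 N2) ?T"
      by (intro image_eqI[where x = "((k1, k2), k3)"]) (auto simp: distinct_pairs_def powr_gap_level_def)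
  qed
  moreover have fin: "finite (Sigma (distinct_pairs N1 N2) ?T)"
    by (simp add: finite_distinct_pairs finite_powr_gap_level split_beta)
  ultimately have "card (resS a C0 m N N1 N2 N3) \<le> card (?g ` Sigma (distinct_pairs N1 N2) ?T)"
    by (intro card_mono finite_imageI)
  also have "\<dots> \<le> card (Sigma (distinct_pairs N1 N2) ?T)" by (rule card_image_le[OF fin])
  also have "\<dots> = (\<Sum>p\<in>distinct_pairs N1 N2. card (?T p))"
    by (simp add: finite_distinct_pairs finite_powr_gap_level split_beta)
  finally show ?thesis by (simp add: split_beta)
qed

lemma card_resS_le:
  fixes a C0 m N N1 N2 N3 :: real
  assumes a: "1 < a" "a < 2" and C0: "C0 > 0" and N: "N1 \<ge> 1" "N2 \<ge> 1" "N3 \<ge> 1"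
  defines "K \<equiv> 4 * C0 / (a * (a - 1))"
  shows "real (card (resS a C0 m N N1 N2 N3))
    \<le> (9 + 33 * K) * (N3 powr (2 - a) * ln (2 + max N1 N2) * min N1 N2 + N1 * N2)"
proof -
  let ?P = "distinct_pairs N1 N2" and ?L = "ln (2 + max N1 N2)"
  have K: "K > 0" using a C0 by (simp add: K_def)
  have "real (card (resS a C0 m N N1 N2 N3))
      \<le> (\<Sum>(k1, k2)\<in>?P. real (card (powr_gap_level a N3 (k1 - k2)
            (\<bar>real_of_int k1\<bar> powr a - \<bar>real_of_int k2\<bar> powr a - m) C0)))"
    using card_resS_le_sum[of a C0 m N N1 N2 N3] by (simp add: case_prod_beta flip: of_nat_sum)
  also have "\<dots> \<le> (\<Sum>(k1, k2)\<in>?P. 1 + K + K * N3 powr (2 - a) / \<bar>real_of_int (k1 - k2)\<bar>)"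
  proof (intro sum_mono, clarify)
    fix k1 k2 assume "(k1, k2) \<in> ?P"
    then have "k1 - k2 \<noteq> 0" by (simp add: distinct_pairs_def)
    from card_powr_gap_level_le_inverse[OF a this C0 N(3)]
    show "real (card (powr_gap_level a N3 (k1 - k2) (\<bar>real_of_int k1\<bar> powr a - \<bar>real_of_int k2\<bar> powr a - m) C0))
        \<le> 1 + K + K * N3 powr (2 - a) / \<bar>real_of_int (k1 - k2)\<bar>" unfolding K_def .
  qed
  also have "\<dots> = (1 + K) * card ?P + K * N3 powr (2 - a) * (\<Sum>(k1, k2)\<in>?P. 1 / \<bar>real_of_int (k1 - k2)\<bar>)"
    by (simp add: sum.distrib sum_distrib_left case_prod_beta)
  also have "\<dots> \<le> (1 + K) * (9 * N1 * N2) + K * N3 powr (2 - a) * (24 * min N1 N2 * ?L)"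
    using K card_distinct_pairs_le[OF N(1,2)] sum_distinct_pairs_inverse_le_min[OF N(1,2)]
    by (intro add_mono mult_left_mono) auto
  also have "\<dots> \<le> (9 + 33 * K) * (N3 powr (2 - a) * ?L * min N1 N2 + N1 * N2)"
  proof -
    have "0 \<le> N3 powr (2 - a) * ?L * min N1 N2" using N by simp
    then show ?thesis using K N by (simp add: algebra_simps mult_right_mono)
  qed
  finally show ?thesis .
qed

lemma resS_swap: "(\<lambda>(k, k1, k2, k3). (k, k3, k2, k1)) ` resS a C0 m N N1 N2 N3 = resS a C0 m N N3 N2 N1"
proof -
  have "x \<in> resS a C0 m N N3 N2 N1 \<longleftrightarrow> (\<lambda>(k, k1, k2, k3). (k, k3, k2, k1)) x \<in> resS a C0 m N N1 N2 N3" for x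
    by (cases x) (auto simp: resS_def algebra_simps)
  then show ?thesis by (force intro: image_eqI)
qed

theorem lemma2p10:
  fixes \<alpha> C0 :: real
  assumes "1 < \<alpha>" "\<alpha> < 2" "C0 > 0"
  shows "\<exists>C>0. \<forall>N N1 N2 N3 m :: real.
     dyadic N \<longrightarrow> dyadic N1 \<longrightarrow> dyadic N2 \<longrightarrow> dyadic N3 \<longrightarrow>
     1 \<le> N1 \<longrightarrow> N1 \<le> N \<longrightarrow> 1 \<le> N2 \<longrightarrow> N2 \<le> N \<longrightarrow> 1 \<le> N3 \<longrightarrow> N3 \<le> N \<longrightarrow>
     real (card (resS \<alpha> C0 m N N1 N2 N3)) \<le>
       C * min (N3 powr (2 - \<alpha>) * ln (2 + max N1 N2) * min N1 N2 + N1 * N2)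
               (N1 powr (2 - \<alpha>) * ln (2 + max N2 N3) * min N2 N3 + N2 * N3)"
proof -
  define C where "C = 9 + 33 * (4 * C0 / (\<alpha> * (\<alpha> - 1)))"
  have "C > 0" unfolding C_def using assms by (intro add_pos_nonneg) auto
  moreover have "real (card (resS \<alpha> C0 m N N1 N2 N3)) \<le>
       C * min (N3 powr (2 - \<alpha>) * ln (2 + max N1 N2) * min N1 N2 + N1 * N2)
               (N1 powr (2 - \<alpha>) * ln (2 + max N2 N3) * min N2 N3 + N2 * N3)"
    if N: "1 \<le> N1" "1 \<le> N2" "1 \<le> N3" for N N1 N2 N3 m
  proof -
    have "card (resS \<alpha> C0 m N N3 N2 N1) = card (resS \<alpha> C0 m N N1 N2 N3)"
      unfolding resS_swap[of \<alpha> C0 m N N1 N2 N3, symmetric] by (rule card_image) (auto simp: inj_on_def)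
    then have "real (card (resS \<alpha> C0 m N N1 N2 N3))
        \<le> C * (N1 powr (2 - \<alpha>) * ln (2 + max N2 N3) * min N2 N3 + N2 * N3)"
      using card_resS_le[OF assms N(3,2,1), of m N] by (simp add: C_def max.commute min.commute mult.commute)
    moreover have "real (card (resS \<alpha> C0 m N N1 N2 N3))
        \<le> C * (N3 powr (2 - \<alpha>) * ln (2 + max N1 N2) * min N1 N2 + N1 * N2)"
      using card_resS_le[OF assms N, of m N] by (simp add: C_def)
    ultimately show ?thesis by (simp add: min_def)
  qed
  ultimately show ?thesis by blast
qed

end
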